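(* Let $\mathbb{F}$ be a finite field, let $n, r, s$ be positive integers, and let $A \in \mathbb{F}^{(r+s)n \times (r+s)n}$ be a totally-non-singular lower-triangular matrix. For $v \in \mathbb{F}^s$ let $v' \in \mathbb{F}^{r+s}$ be obtained by appending $r$ zeros to $v$, and for $x = (x_1,\dots,x_k) \in (\mathbb{F}^s)^k$ let $x' = (x'_1,\dots,x'_k) \in \mathbb{F}^{(r+s)k}$. Define $\mathsf{TC}^{(n)}_{A,(s,r)}\colon (\mathbb{F}^s)^{(\leq n)} \to (\mathbb{F}^{r+s})^{(\leq n)}$ by mapping $x \in (\mathbb{F}^s)^k$ ($k \leq n$) to $A^{((r+s)k)} x' \in \mathbb{F}^{(r+s)k}$, viewed as an element of $(\mathbb{F}^{r+s})^k$ by grouping consecutive blocks of $r+s$ coordinates. Then $\mathsf{TC}^{(n)}_{A,(s,r)}$ is an $n$-truncated MDS tree code with distance $\frac{r}{r+s}$.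
   Context: For an $m \times m$ matrix $A$ and $k \leq m$, $A^{(k)}$ denotes the top-left $k \times k$ submatrix of $A$; for index sets $I,J$, $A[I|J]$ is the submatrix with rows $I$ and columns $J$. A lower-triangular $A \in \mathbb{F}^{m \times m}$ is totally-non-singular if for every $1 \leq t \leq m$ and all $I = \{i_1 < \dots < i_t\}, J = \{j_1 < \dots < j_t\} \subseteq [m]$ with $i_u \geq j_u$ for all $u \in [t]$, the submatrix $A[I|J]$ is non-singular. An $n$-truncated tree code $\mathsf{TC}^{(n)}\colon \Sigma^{(\leq n)} \to \Gamma^{(\leq n)}$ maps each string of length $k \leq n$ over $\Sigma$ to a string of length $k$ over $\Gamma$ such that the $i$-th output symbol depends only on the first $i$ input symbols. For $x \neq x' \in \Sigma^k$, $\operatorname{split}(x,x')$ is the largest $t$ with $x_u = x'_u$ for all $u \leq t$; $\Delta$ is Hamming distance over $\Gamma$. Its distance is $\delta_{\mathsf{TC}^{(n)}} := \inf_{k \leq n,\, x \neq x' \in \Sigma^k} \frac{\Delta(\mathsf{TC}^{(n)}(x),\mathsf{TC}^{(n)}(x'))}{k - \operatorname{split}(x,x')}$. It is maximum-distance separable (MDS) if $\delta_{\mathsf{TC}^{(n)}} > 1 - \frac{\log|\Sigma|}{\log|\Gamma|}$. *)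

theory Defs
  imports Complex_Main "Jordan_Normal_Form.Determinant"
begin

(* Matrices are Jordan_Normal_Form matrices, indices 0-based. *)

definition lower_tri :: "'a::zero mat \<Rightarrow> bool" where
  "lower_tri A \<longleftrightarrow> (\<forall>i<dim_row A. \<forall>j<dim_col A. i < j \<longrightarrow> A $$ (i,j) = 0)"

definition submat :: "'a mat \<Rightarrow> nat set \<Rightarrow> nat set \<Rightarrow> 'a mat" where
  "submat A I J = mat (card I) (card J)
     (\<lambda>(u,v). A $$ (sorted_list_of_set I ! u, sorted_list_of_set J ! v))"

definition totally_non_singular :: "'a::field mat \<Rightarrow> bool" where
  "totally_non_singular A \<longleftrightarrow> lower_tri A \<and>
     (\<forall>t I J. 1 \<le> t \<and> t \<le> dim_row A \<and> I \<subseteq> {0..<dim_row A} \<and> J \<subseteq> {0..<dim_row A}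
        \<and> card I = t \<and> card J = t
        \<and> (\<forall>u<t. sorted_list_of_set I ! u \<ge> sorted_list_of_set J ! u)
        \<longrightarrow> det (submat A I J) \<noteq> 0)"

definition truncated_tree_code ::
  "nat \<Rightarrow> 'a set \<Rightarrow> 'b set \<Rightarrow> ('a list \<Rightarrow> 'b list) \<Rightarrow> bool" where
  "truncated_tree_code n \<Sigma> \<Gamma> TC \<longleftrightarrow>
     (\<forall>x \<in> lists \<Sigma>. length x \<le> n \<longrightarrow> TC x \<in> lists \<Gamma> \<and> length (TC x) = length x) \<and>
     (\<forall>x \<in> lists \<Sigma>. \<forall>y \<in> lists \<Sigma>. length x \<le> n \<longrightarrow> length y \<le> n \<longrightarrow>
        (\<forall>i. i < length x \<longrightarrow> i < length y \<longrightarrow> take (Suc i) x = take (Suc i) y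
              \<longrightarrow> TC x ! i = TC y ! i))"

definition hamming :: "'b list \<Rightarrow> 'b list \<Rightarrow> nat" where
  "hamming x y = card {i. i < length x \<and> i < length y \<and> x ! i \<noteq> y ! i}"

(* largest t with x_u = x'_u for all u \<le> t (1-based), i.e. longest common prefix *)
definition split_idx :: "'a list \<Rightarrow> 'a list \<Rightarrow> nat" where
  "split_idx x y = (GREATEST t. t \<le> length x \<and> take t x = take t y)"

definition tc_distance :: "nat \<Rightarrow> 'a set \<Rightarrow> ('a list \<Rightarrow> 'b list) \<Rightarrow> real" where
  "tc_distance n \<Sigma> TC = Inf ((\<lambda>(x,y). real (hamming (TC x) (TC y)) / real (length x - split_idx x y))
      ` {(x,y). x \<in> lists \<Sigma> \<and> y \<in> lists \<Sigma> \<and> length x \<le> n \<and> length y = length x \<and> x \<noteq> y})"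

definition MDS_tree_code :: "nat \<Rightarrow> 'a set \<Rightarrow> 'b set \<Rightarrow> ('a list \<Rightarrow> 'b list) \<Rightarrow> bool" where
  "MDS_tree_code n \<Sigma> \<Gamma> TC \<longleftrightarrow>
     tc_distance n \<Sigma> TC > 1 - ln (real (card \<Sigma>)) / ln (real (card \<Gamma>))"

(* The code TC_{A,(s,r)}: input symbols are vectors in F^s (lists of length s),
   output symbols vectors in F^(r+s). *)
definition pad_input :: "nat \<Rightarrow> 'a::zero list list \<Rightarrow> 'a list" where
  "pad_input r x = concat (map (\<lambda>v. v @ replicate r 0) x)"

definition TC_A :: "'a::field mat \<Rightarrow> nat \<Rightarrow> nat \<Rightarrow> 'a list list \<Rightarrow> 'a list list" where
  "TC_A A s r x =
     (let k = length x; m = (r+s)*k; x' = pad_input r x;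
          y = (\<lambda>i. \<Sum>j<m. A $$ (i,j) * x' ! j)
      in map (\<lambda>b. map (\<lambda>c. y ((r+s)*b + c)) [0..<r+s]) [0..<k])"

end

theory Submission
  imports Defs
begin

(* Let x and y differ first in block t and put v = x' - y'.  The output blocks t, ..., k - 1 of
   the two codewords agree exactly where the corresponding (r + s)-blocks of A v vanish.
   If, for every support index c of v, A v had at least as many zero entries from c on as v has
   non-zero entries from c on, one could choose greedily from the top a set I of zero rows
   dominating the support J of v entrywise; then A[I|J] is non-singular by assumption, yet it
   annihilates v restricted to J.  Truncating v at such a c and inducting shows that, counted
   from the first non-zero entry of v, A v has fewer zero entries than v has non-zero ones.
   Since v lives on the s data coordinates of blocks t, ..., k - 1, fewer than s (k - t) rows
   vanish from block t on, hence fewer than s (k - t) / (r + s) blocks, and more than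
   r (k - t) / (r + s) output blocks differ. *)

definition suffix_dominated :: "'a::linorder set \<Rightarrow> 'a set \<Rightarrow> bool" where
  "suffix_dominated J Z \<longleftrightarrow> (\<forall>c\<in>J. card {j\<in>J. c \<le> j} \<le> card {z\<in>Z. c \<le> z})"

lemma sorted_list_of_set_insert_greater:
  fixes z :: "'a::linorder"
  assumes "finite I" and "\<forall>i\<in>I. i < z"
  shows "sorted_list_of_set (insert z I) = sorted_list_of_set I @ [z]"
  using assms by (intro sorted_list_of_set_unique[THEN iffD1]) (auto simp: sorted_wrt_append)

lemma suffix_dominated_Diff_Max:
  fixes J Z :: "'a::linorder set"
  assumes "finite J" "finite Z" "J \<noteq> {}" "Z \<noteq> {}" "Max J \<le> Max Z" "suffix_dominated J Z"
  shows "suffix_dominated (J - {Max J}) (Z - {Max Z})"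
  unfolding suffix_dominated_def
proof
  fix c assume c: "c \<in> J - {Max J}"
  then have "c \<le> Max J" using assms(1) by simp
  then have "c \<le> Max Z" using assms(5) by simp
  have "{j\<in>J - {Max J}. c \<le> j} = {j\<in>J. c \<le> j} - {Max J}"
    and "{z\<in>Z - {Max Z}. c \<le> z} = {z\<in>Z. c \<le> z} - {Max Z}" by auto
  moreover have "card ({j\<in>J. c \<le> j} - {Max J}) = card {j\<in>J. c \<le> j} - 1"
    using \<open>c \<le> Max J\<close> assms(1,3) by simp
  moreover have "card ({z\<in>Z. c \<le> z} - {Max Z}) = card {z\<in>Z. c \<le> z} - 1"
    using \<open>c \<le> Max Z\<close> assms(2,4) by simp
  ultimately show "card {j\<in>J - {Max J}. c \<le> j} \<le> card {z\<in>Z - {Max Z}. c \<le> z}"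
    using assms(6) c by (simp add: suffix_dominated_def diff_le_mono)
qed

lemma exists_dominating_subset:
  fixes J Z :: "'a::linorder set"
  assumes "finite J" and "finite Z" and "suffix_dominated J Z"
  shows "\<exists>I\<subseteq>Z. card I = card J \<and>
           (\<forall>u<card J. sorted_list_of_set J ! u \<le> sorted_list_of_set I ! u)"
  using assms
proof (induction "card J" arbitrary: J Z)
  case 0
  then show ?case by auto
next
  case (Suc p)
  have "J \<noteq> {}" using Suc.hyps(2) by auto
  then have "Max J \<in> J" using Suc.prems(1) by simp
  then have "0 < card {z\<in>Z. Max J \<le> z}"
    using Suc.prems(1,3) less_le_trans[of 0 "card {j\<in>J. Max J \<le> j}"]
    by (fastforce simp: suffix_dominated_def card_gt_0_iff)
  then obtain z where "z \<in> Z" "Max J \<le> z" by (metis (no_types, lifting) card.empty less_irrefl Collect_empty_eq)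
  then have "Z \<noteq> {}" and "Max J \<le> Max Z" using Suc.prems(2) Max_ge order_trans by blast+
  define zm where "zm = Max Z"
  have zm: "zm \<in> Z" "\<forall>z\<in>Z - {zm}. z < zm"
    using \<open>Z \<noteq> {}\<close> Suc.prems(2) by (auto simp: zm_def less_le)
  have "suffix_dominated (J - {Max J}) (Z - {zm})"
    using suffix_dominated_Diff_Max \<open>J \<noteq> {}\<close> \<open>Z \<noteq> {}\<close> \<open>Max J \<le> Max Z\<close> Suc.prems
    unfolding zm_def by blast
  moreover have "p = card (J - {Max J})" using Suc.hyps(2) \<open>Max J \<in> J\<close> by simp
  ultimately obtain I where I: "I \<subseteq> Z - {zm}" "card I = p"
    "\<forall>u<p. sorted_list_of_set (J - {Max J}) ! u \<le> sorted_list_of_set I ! u"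
    using Suc.hyps(1)[of "J - {Max J}" "Z - {zm}"] Suc.prems(1,2) by auto
  have "finite I" using I(1) Suc.prems(2) finite_subset by blast
  have sorted_J: "sorted_list_of_set J = sorted_list_of_set (J - {Max J}) @ [Max J]"
    using sorted_list_of_set_insert_greater[of "J - {Max J}" "Max J"] \<open>Max J \<in> J\<close> Suc.prems(1)
    by (simp add: insert_absorb less_le)
  have sorted_I: "sorted_list_of_set (insert zm I) = sorted_list_of_set I @ [zm]"
    using sorted_list_of_set_insert_greater[of I zm] \<open>finite I\<close> I(1) zm(2) by blast
  show ?case
  proof (intro exI[of _ "insert zm I"] conjI allI impI)
    show "insert zm I \<subseteq> Z" using I(1) zm(1) by auto
    have "zm \<notin> I" using I(1) by blast
    then show "card (insert zm I) = card J" using I(2) Suc.hyps(2) \<open>finite I\<close> by simp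
    fix u assume "u < card J"
    then have "u < p \<or> u = p" using Suc.hyps(2) by auto
    then show "sorted_list_of_set J ! u \<le> sorted_list_of_set (insert zm I) ! u"
      unfolding sorted_J sorted_I using I(2,3) \<open>p = card (J - {Max J})\<close> \<open>Max J \<le> Max Z\<close>
      by (auto simp: nth_append zm_def)
  qed
qed

lemma totally_non_singular_imp_lower_tri: "totally_non_singular A \<Longrightarrow> lower_tri A"
  by (simp add: totally_non_singular_def)

lemma mult_mat_vec_nth_sum:
  assumes "A \<in> carrier_mat nr N" and "v \<in> carrier_vec N" and "i < nr"
  shows "(A *\<^sub>v v) $ i = (\<Sum>j<N. A $$ (i, j) * v $ j)"
  using assms by (auto simp: scalar_prod_def lessThan_atLeast0 intro!: sum.cong)

lemma lower_tri_mult_mat_vec_cong: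
  assumes "lower_tri A" and A: "A \<in> carrier_mat N N" and "u \<in> carrier_vec N" "v \<in> carrier_vec N"
    and "i < N" and "\<forall>j\<le>i. u $ j = v $ j"
  shows "(A *\<^sub>v u) $ i = (A *\<^sub>v v) $ i"
proof -
  have "A $$ (i, j) * u $ j = A $$ (i, j) * v $ j" if "j < N" for j
    using assms that by (cases "j \<le> i") (auto simp: lower_tri_def)
  then show ?thesis
    using assms by (simp add: mult_mat_vec_nth_sum[OF A] del: index_mult_mat_vec)
qed

lemma submat_mult_vec_support:
  assumes A: "A \<in> carrier_mat nr N" and v: "v \<in> carrier_vec N"
    and I: "I \<subseteq> {..<nr}" and J: "J \<subseteq> {..<N}" "\<forall>j<N. v $ j \<noteq> 0 \<longrightarrow> j \<in> J"
  shows "submat A I J *\<^sub>v vec (card J) (\<lambda>u. v $ (sorted_list_of_set J ! u))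
       = vec (card I) (\<lambda>u. (A *\<^sub>v v) $ (sorted_list_of_set I ! u))"
proof (rule eq_vecI)
  fix u assume "u < dim_vec (vec (card I) (\<lambda>u. (A *\<^sub>v v) $ (sorted_list_of_set I ! u)))"
  then have u: "u < card I" by simp
  define i where "i = sorted_list_of_set I ! u"
  have "finite I" "finite J" using I J(1) finite_subset by blast+
  then have "i \<in> I" using u unfolding i_def
    by (metis length_sorted_list_of_set nth_mem set_sorted_list_of_set)
  then have i: "i < nr" using I by auto
  have bij: "bij_betw ((!) (sorted_list_of_set J)) {..<card J} J"
    using bij_betw_nth[of "sorted_list_of_set J"] \<open>finite J\<close> by (simp add: lessThan_atLeast0)
  have "(submat A I J *\<^sub>v vec (card J) (\<lambda>u. v $ (sorted_list_of_set J ! u))) $ u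
      = (\<Sum>w<card J. A $$ (i, sorted_list_of_set J ! w) * v $ (sorted_list_of_set J ! w))"
    using u by (auto simp: submat_def scalar_prod_def i_def lessThan_atLeast0 intro!: sum.cong)
  also have "\<dots> = (\<Sum>j\<in>J. A $$ (i, j) * v $ j)"
    using sum.reindex_bij_betw[OF bij, of "\<lambda>j. A $$ (i, j) * v $ j"] by simp
  also have "\<dots> = (\<Sum>j<N. A $$ (i, j) * v $ j)"
    using J by (intro sum.mono_neutral_left) auto
  also have "\<dots> = (A *\<^sub>v v) $ i" using A v i by (simp add: mult_mat_vec_nth_sum del: index_mult_mat_vec)
  finally show "(submat A I J *\<^sub>v vec (card J) (\<lambda>u. v $ (sorted_list_of_set J ! u))) $ u
      = vec (card I) (\<lambda>u. (A *\<^sub>v v) $ (sorted_list_of_set I ! u)) $ u"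
    using u by (simp add: i_def)
qed (simp add: submat_def)

lemma totally_non_singular_submat_det_neq_0:
  assumes "totally_non_singular A" and "A \<in> carrier_mat N N"
    and "I \<subseteq> {..<N}" "J \<subseteq> {..<N}" "J \<noteq> {}" "card I = card J"
    and "\<forall>u<card J. sorted_list_of_set J ! u \<le> sorted_list_of_set I ! u"
  shows "det (submat A I J) \<noteq> 0"
proof -
  have "finite J" using assms(4) finite_subset by blast
  then have "1 \<le> card J" "card J \<le> N"
    using assms(4,5) card_mono[OF _ assms(4)] by (auto simp: Suc_le_eq card_gt_0_iff)
  moreover have "I \<subseteq> {0..<dim_row A}" "J \<subseteq> {0..<dim_row A}" using assms(2-4) by auto
  ultimately show ?thesis
    using assms(1)[unfolded totally_non_singular_def, THEN conjunct2, rule_format, of "card J" I J]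
      assms(2,6,7) by blast
qed

lemma totally_non_singular_exists_support_index:
  fixes A :: "'a::field mat"
  assumes TNS: "totally_non_singular A" and A: "A \<in> carrier_mat N N"
    and v: "v \<in> carrier_vec N" "v \<noteq> 0\<^sub>v N"
  shows "\<exists>c<N. v $ c \<noteq> 0 \<and>
    card {i. c \<le> i \<and> i < N \<and> (A *\<^sub>v v) $ i = 0} < card {j. c \<le> j \<and> j < N \<and> v $ j \<noteq> 0}"
proof (rule ccontr)
  assume no_index: "\<not> ?thesis"
  define J where "J = {j. j < N \<and> v $ j \<noteq> 0}"
  define Z where "Z = {i. i < N \<and> (A *\<^sub>v v) $ i = 0}"
  define w where "w = vec (card J) (\<lambda>u. v $ (sorted_list_of_set J ! u))"
  have JN: "J \<subseteq> {..<N}" and ZN: "Z \<subseteq> {..<N}" by (auto simp: J_def Z_def)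
  then have "finite J" "finite Z" by (auto intro: finite_subset)
  have "suffix_dominated J Z"
    unfolding suffix_dominated_def
  proof
    fix c assume "c \<in> J"
    moreover have "{j\<in>J. c \<le> j} = {j. c \<le> j \<and> j < N \<and> v $ j \<noteq> 0}"
      and "{z\<in>Z. c \<le> z} = {i. c \<le> i \<and> i < N \<and> (A *\<^sub>v v) $ i = 0}"
      by (auto simp: J_def Z_def)
    ultimately show "card {j\<in>J. c \<le> j} \<le> card {z\<in>Z. c \<le> z}"
      using no_index unfolding J_def by (metis (mono_tags, lifting) mem_Collect_eq not_less)
  qed
  then obtain I where I: "I \<subseteq> Z" "card I = card J"
    "\<forall>u<card J. sorted_list_of_set J ! u \<le> sorted_list_of_set I ! u"
    using exists_dominating_subset[OF \<open>finite J\<close> \<open>finite Z\<close>] by blast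
  have "J \<noteq> {}" using v by (auto simp: J_def vec_eq_iff)
  then have "0 < card J" using \<open>finite J\<close> by (simp add: card_gt_0_iff)
  then have "sorted_list_of_set J ! 0 \<in> J"
    using \<open>finite J\<close> by (metis length_sorted_list_of_set nth_mem set_sorted_list_of_set)
  then have "w \<noteq> 0\<^sub>v (card J)" using \<open>0 < card J\<close> by (auto simp: w_def J_def vec_eq_iff)
  moreover have "submat A I J *\<^sub>v w = 0\<^sub>v (card J)"
  proof -
    have "sorted_list_of_set I ! u \<in> Z" if "u < card I" for u
      using that I(1) finite_subset[OF I(1) \<open>finite Z\<close>]
      by (metis length_sorted_list_of_set nth_mem set_sorted_list_of_set subsetD)
    then have "vec (card I) (\<lambda>u. (A *\<^sub>v v) $ (sorted_list_of_set I ! u)) = 0\<^sub>v (card J)"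
      using I(2) by (intro eq_vecI) (auto simp: Z_def)
    moreover have "\<forall>j<N. v $ j \<noteq> 0 \<longrightarrow> j \<in> J" by (simp add: J_def)
    ultimately show ?thesis
      using submat_mult_vec_support[OF A v(1) subset_trans[OF I(1) ZN] JN] by (simp add: w_def)
  qed
  moreover have "submat A I J \<in> carrier_mat (card J) (card J)" "w \<in> carrier_vec (card J)"
    using I(2) by (simp_all add: submat_def w_def)
  ultimately have "det (submat A I J) = 0"
    using det_0_iff_vec_prod_zero_field by blast
  moreover have "det (submat A I J) \<noteq> 0"
    using totally_non_singular_submat_det_neq_0[OF TNS A subset_trans[OF I(1) ZN] JN \<open>J \<noteq> {}\<close> I(2,3)] .
  ultimately show False by contradiction
qed

lemma card_interval_Collect_split:
  fixes P :: "nat \<Rightarrow> bool"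
  assumes "lo \<le> c" and "c \<le> hi"
  shows "card {i. lo \<le> i \<and> i < hi \<and> P i}
           = card {i. lo \<le> i \<and> i < c \<and> P i} + card {i. c \<le> i \<and> i < hi \<and> P i}"
proof -
  have "{i. lo \<le> i \<and> i < hi \<and> P i} = {i. lo \<le> i \<and> i < c \<and> P i} \<union> {i. c \<le> i \<and> i < hi \<and> P i}"
    using assms by auto
  then show ?thesis by (simp add: card_Un_disjoint disjoint_iff)
qed

lemma totally_non_singular_card_zero_rows_less:
  fixes A :: "'a::field mat"
  assumes TNS: "totally_non_singular A" and A: "A \<in> carrier_mat N N"
    and "v \<in> carrier_vec N" and "a < N" "v $ a \<noteq> 0" "\<forall>j<a. v $ j = 0"
  shows "card {i. a \<le> i \<and> i < N \<and> (A *\<^sub>v v) $ i = 0} < card {j. a \<le> j \<and> j < N \<and> v $ j \<noteq> 0}"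
  using assms(3-)
proof (induction "card {j. a \<le> j \<and> j < N \<and> v $ j \<noteq> 0}" arbitrary: v rule: less_induct)
  case less
  have "v \<noteq> 0\<^sub>v N" using less.prems(2,3) by auto
  then obtain c where c: "c < N" "v $ c \<noteq> 0" and few_zeros:
      "card {i. c \<le> i \<and> i < N \<and> (A *\<^sub>v v) $ i = 0} < card {j. c \<le> j \<and> j < N \<and> v $ j \<noteq> 0}"
    using totally_non_singular_exists_support_index[OF TNS A less.prems(1)] by blast
  have "a \<le> c" using less.prems(4) c(2) not_less by blast
  show ?case
  proof (cases "a = c")
    case True
    then show ?thesis using few_zeros by simp
  next
    case False
    define u where "u = vec N (\<lambda>j. if j < c then v $ j else 0)"
    have u: "u \<in> carrier_vec N" "u $ a \<noteq> 0" "\<forall>j<a. u $ j = 0"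
      using False \<open>a \<le> c\<close> c(1) less.prems by (auto simp: u_def)
    have "{j. a \<le> j \<and> j < N \<and> u $ j \<noteq> 0} = {j. a \<le> j \<and> j < c \<and> v $ j \<noteq> 0}"
      using c(1) by (auto simp: u_def split: if_splits)
    moreover have support_split: "card {j. a \<le> j \<and> j < N \<and> v $ j \<noteq> 0}
        = card {j. a \<le> j \<and> j < c \<and> v $ j \<noteq> 0} + card {j. c \<le> j \<and> j < N \<and> v $ j \<noteq> 0}"
      using \<open>a \<le> c\<close> c(1) by (intro card_interval_Collect_split) simp_all
    moreover have "0 < card {j. c \<le> j \<and> j < N \<and> v $ j \<noteq> 0}"
      using c by (auto simp: card_gt_0_iff)
    ultimately have "card {i. a \<le> i \<and> i < N \<and> (A *\<^sub>v u) $ i = 0} < card {j. a \<le> j \<and> j < c \<and> v $ j \<noteq> 0}"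
      using less.hyps[OF _ u(1) less.prems(2) u(2,3)] by simp
    \<comment> \<open>Truncating v at c leaves the rows of A v before c unchanged, as A is lower triangular.\<close>
    moreover have "(A *\<^sub>v u) $ i = (A *\<^sub>v v) $ i" if "i < c" for i
      using lower_tri_mult_mat_vec_cong[OF totally_non_singular_imp_lower_tri[OF TNS] A u(1) less.prems(1)]
        that c(1)
      by (simp add: u_def)
    then have "card {i. a \<le> i \<and> i < c \<and> (A *\<^sub>v v) $ i = 0}
        \<le> card {i. a \<le> i \<and> i < N \<and> (A *\<^sub>v u) $ i = 0}"
      using c(1) by (intro card_mono) auto
    moreover have "card {i. a \<le> i \<and> i < N \<and> (A *\<^sub>v v) $ i = 0}
        = card {i. a \<le> i \<and> i < c \<and> (A *\<^sub>v v) $ i = 0} + card {i. c \<le> i \<and> i < N \<and> (A *\<^sub>v v) $ i = 0}"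
      using \<open>a \<le> c\<close> c(1) by (intro card_interval_Collect_split) simp_all
    ultimately show ?thesis
      using few_zeros support_split by linarith
  qed
qed

lemma totally_non_singular_card_zero_rows_from_less:
  fixes A :: "'a::field mat"
  assumes TNS: "totally_non_singular A" and A: "A \<in> carrier_mat N N" and v: "v \<in> carrier_vec N"
    and a: "a < N" "v $ a \<noteq> 0" "\<forall>j<a. v $ j = 0" and "lo \<le> a"
  shows "card {i. lo \<le> i \<and> i < N \<and> (A *\<^sub>v v) $ i = 0}
           < card ({lo..<a} \<union> {j. a \<le> j \<and> j < N \<and> v $ j \<noteq> 0})"
proof -
  have "(A *\<^sub>v v) $ i = (A *\<^sub>v 0\<^sub>v N) $ i" if "i < a" for i
    using lower_tri_mult_mat_vec_cong[OF totally_non_singular_imp_lower_tri[OF TNS] A v] that a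
    by simp
  then have "{i. lo \<le> i \<and> i < N \<and> (A *\<^sub>v v) $ i = 0}
      \<subseteq> {lo..<a} \<union> {i. a \<le> i \<and> i < N \<and> (A *\<^sub>v v) $ i = 0}"
    using A by auto
  then have "card {i. lo \<le> i \<and> i < N \<and> (A *\<^sub>v v) $ i = 0}
      \<le> card ({lo..<a} \<union> {i. a \<le> i \<and> i < N \<and> (A *\<^sub>v v) $ i = 0})"
    by (rule card_mono[rotated]) simp
  also have "\<dots> \<le> (a - lo) + card {i. a \<le> i \<and> i < N \<and> (A *\<^sub>v v) $ i = 0}"
    using card_Un_le[of "{lo..<a}"] by simp
  also have "\<dots> < (a - lo) + card {j. a \<le> j \<and> j < N \<and> v $ j \<noteq> 0}"
    using totally_non_singular_card_zero_rows_less[OF TNS A v a] by simp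
  also have "\<dots> = card ({lo..<a} \<union> {j. a \<le> j \<and> j < N \<and> v $ j \<noteq> 0})"
    by (subst card_Un_disjoint) auto
  finally show ?thesis .
qed

lemma inj_on_block_position:
  fixes w s :: nat
  assumes "s \<le> w"
  shows "inj_on (\<lambda>(b, e). w * b + e) (B \<times> {..<s})"
proof (rule inj_onI, clarsimp)
  fix b e b' e' assume "e < s" "e' < s" "w * b + e = w * b' + e'"
  then have "(w * b + e) div w = (w * b' + e') div w" "(w * b + e) mod w = (w * b' + e') mod w"
    by simp_all
  then show "b = b' \<and> e = e'" using \<open>e < s\<close> \<open>e' < s\<close> assms by simp
qed

lemma card_block_positions:
  fixes w s :: nat
  assumes "s \<le> w"
  shows "card ((\<lambda>(b, e). w * b + e) ` (B \<times> {..<s})) = card B * s"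
  using card_image[OF inj_on_block_position[OF assms]] by (simp add: card_cartesian_product)

lemma block_positions_eq:
  fixes w s :: nat
  assumes "s \<le> w"
  shows "{j. w * t \<le> j \<and> j < w * k \<and> j mod w < s} = (\<lambda>(b, e). w * b + e) ` ({t..<k} \<times> {..<s})"
proof (intro equalityI subsetI)
  fix j assume j: "j \<in> {j. w * t \<le> j \<and> j < w * k \<and> j mod w < s}"
  then have "0 < w" by (cases w) auto
  then have "t \<le> j div w" "j div w < k"
    using j div_le_mono[of "w * t" j w] by (auto simp: div_less_iff_less_mult mult.commute)
  then show "j \<in> (\<lambda>(b, e). w * b + e) ` ({t..<k} \<times> {..<s})"
    using j by (intro image_eqI[of _ _ "(j div w, j mod w)"]) auto
next
  fix j assume "j \<in> (\<lambda>(b, e). w * b + e) ` ({t..<k} \<times> {..<s})"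
  then obtain b e where "t \<le> b" "b < k" "e < s" "j = w * b + e" by auto
  moreover have "w * b + e < w * Suc b" using \<open>e < s\<close> assms by simp
  moreover have "w * Suc b \<le> w * k" using \<open>b < k\<close> by (intro mult_le_mono2) simp
  moreover have "w * t \<le> w * b + e" using \<open>t \<le> b\<close> by (meson mult_le_mono2 trans_le_add1)
  ultimately show "j \<in> {j. w * t \<le> j \<and> j < w * k \<and> j mod w < s}"
    using assms by simp
qed

lemma totally_non_singular_card_zero_blocks_less:
  fixes A :: "'a::field mat"
  assumes TNS: "totally_non_singular A" and A: "A \<in> carrier_mat N N" and v: "v \<in> carrier_vec N"
    and "s \<le> w" "t < k" "w * k \<le> N"
    and supp: "\<forall>j<N. v $ j \<noteq> 0 \<longrightarrow> j < w * k \<and> j mod w < s"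
    and first: "v $ a \<noteq> 0" "\<forall>j<a. v $ j = 0" "w * t \<le> a" "a < w * t + s"
  shows "w * card {b. t \<le> b \<and> b < k \<and> (\<forall>e<w. (A *\<^sub>v v) $ (w * b + e) = 0)} < s * (k - t)"
proof -
  define ZB where "ZB = {b. t \<le> b \<and> b < k \<and> (\<forall>e<w. (A *\<^sub>v v) $ (w * b + e) = 0)}"
  define S where "S = {j. a \<le> j \<and> j < N \<and> v $ j \<noteq> 0}"
  have "w * Suc t \<le> w * k" using \<open>t < k\<close> by (intro mult_le_mono2) simp
  then have "a < N" using first(4) \<open>s \<le> w\<close> \<open>w * k \<le> N\<close> by simp
  have "(\<lambda>(b, e). w * b + e) ` (ZB \<times> {..<w}) \<subseteq> {i. w * t \<le> i \<and> i < N \<and> (A *\<^sub>v v) $ i = 0}"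
  proof
    fix i assume "i \<in> (\<lambda>(b, e). w * b + e) ` (ZB \<times> {..<w})"
    then obtain b e where "b \<in> ZB" "e < w" "i = w * b + e" by auto
    then have "i \<in> {j. w * t \<le> j \<and> j < w * k \<and> j mod w < w}"
      unfolding block_positions_eq[OF order_refl] by (force simp: ZB_def)
    then show "i \<in> {i. w * t \<le> i \<and> i < N \<and> (A *\<^sub>v v) $ i = 0}"
      using \<open>b \<in> ZB\<close> \<open>e < w\<close> \<open>i = w * b + e\<close> \<open>w * k \<le> N\<close> by (simp add: ZB_def)
  qed
  then have "card ((\<lambda>(b, e). w * b + e) ` (ZB \<times> {..<w}))
      \<le> card {i. w * t \<le> i \<and> i < N \<and> (A *\<^sub>v v) $ i = 0}"
    by (rule card_mono[rotated]) simp
  then have "w * card ZB \<le> card {i. w * t \<le> i \<and> i < N \<and> (A *\<^sub>v v) $ i = 0}"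
    unfolding card_block_positions[OF order_refl] by (simp only: mult.commute)
  also have "\<dots> < card ({w * t..<a} \<union> S)"
    using totally_non_singular_card_zero_rows_from_less[OF TNS A v \<open>a < N\<close> first(1-3)]
    by (simp add: S_def)
  also have "\<dots> \<le> card {j. w * t \<le> j \<and> j < w * k \<and> j mod w < s}"
  proof (rule card_mono)
    show "finite {j. w * t \<le> j \<and> j < w * k \<and> j mod w < s}" by simp
    have "j mod w < s" if "w * t \<le> j" "j < a" for j
    proof -
      obtain d where "j = w * t + d" using \<open>w * t \<le> j\<close> le_Suc_ex by blast
      moreover have "d < s" using that first(4) calculation by simp
      ultimately show ?thesis using \<open>s \<le> w\<close> by simp
    qed
    then show "{w * t..<a} \<union> S \<subseteq> {j. w * t \<le> j \<and> j < w * k \<and> j mod w < s}"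
      using supp first(3,4) \<open>w * Suc t \<le> w * k\<close> \<open>s \<le> w\<close>
      by (fastforce simp: S_def)
  qed
  also have "\<dots> = s * (k - t)"
    using block_positions_eq[OF \<open>s \<le> w\<close>] card_block_positions[OF \<open>s \<le> w\<close>] by simp
  finally show ?thesis unfolding ZB_def .
qed

(* The padded input x' of the paper, extended by zeros to a vector of length N. *)
definition pad_vec :: "nat \<Rightarrow> nat \<Rightarrow> nat \<Rightarrow> 'a::zero list list \<Rightarrow> 'a vec" where
  "pad_vec N s r x = vec N (\<lambda>j. if j < (r + s) * length x \<and> j mod (r + s) < s
                                  then x ! (j div (r + s)) ! (j mod (r + s)) else 0)"

lemma nth_pad_input:
  assumes "x \<in> lists {v. length v = s}" and "j < (r + s) * length x"
  shows "pad_input r x ! j = (if j mod (r + s) < s then x ! (j div (r + s)) ! (j mod (r + s)) else 0)"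
  using assms
proof (induction x arbitrary: j)
  case Nil
  then show ?case by simp
next
  case (Cons v x)
  have "length v = s" using Cons.hyps by simp
  have pad_Cons: "pad_input r (v # x) = (v @ replicate r 0) @ pad_input r x"
    by (simp add: pad_input_def)
  show ?case
  proof (cases "j < r + s")
    case True
    then show ?thesis unfolding pad_Cons using \<open>length v = s\<close> by (auto simp: nth_append)
  next
    case False
    then obtain j' where j': "j = (r + s) + j'" using le_Suc_ex not_less by blast
    then have "j' < (r + s) * length x" using Cons.prems by simp
    then show ?thesis
      using Cons.IH \<open>length v = s\<close> j' unfolding pad_Cons by (simp add: nth_append)
  qed
qed

lemma length_TC_A [simp]: "length (TC_A A s r x) = length x"
  by (simp add: TC_A_def Let_def)

lemma length_TC_A_nth [simp]: "b < length x \<Longrightarrow> length (TC_A A s r x ! b) = r + s"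
  by (simp add: TC_A_def Let_def)

lemma TC_A_nth_nth:
  assumes A: "A \<in> carrier_mat N N" and x: "x \<in> lists {v. length v = s}"
    and "(r + s) * length x \<le> N" and "b < length x" and "e < r + s"
  shows "TC_A A s r x ! b ! e = (A *\<^sub>v pad_vec N s r x) $ ((r + s) * b + e)"
proof -
  define i where "i = (r + s) * b + e"
  have "i < (r + s) * Suc b" using \<open>e < r + s\<close> by (simp add: i_def)
  also have "\<dots> \<le> (r + s) * length x" using \<open>b < length x\<close> by (intro mult_le_mono2) simp
  finally have i: "i < (r + s) * length x" .
  have "TC_A A s r x ! b ! e = (\<Sum>j<(r + s) * length x. A $$ (i, j) * pad_input r x ! j)"
    using assms(4,5) by (simp add: TC_A_def Let_def i_def)
  also have "\<dots> = (\<Sum>j<(r + s) * length x. A $$ (i, j) * pad_vec N s r x $ j)"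
    using assms(3) nth_pad_input[OF x] by (intro sum.cong) (auto simp: pad_vec_def)
  also have "\<dots> = (\<Sum>j<N. A $$ (i, j) * pad_vec N s r x $ j)"
    using assms(3) by (intro sum.mono_neutral_left) (auto simp: pad_vec_def)
  also have "\<dots> = (A *\<^sub>v pad_vec N s r x) $ i"
    using A i assms(3) by (simp add: mult_mat_vec_nth_sum pad_vec_def del: index_mult_mat_vec)
  finally show ?thesis by (simp add: i_def)
qed

lemma truncated_tree_code_TC_A:
  fixes A :: "'a::field mat"
  assumes "lower_tri A" and A: "A \<in> carrier_mat ((r + s) * n) ((r + s) * n)"
  shows "truncated_tree_code n {v. length v = s} {w. length w = r + s} (TC_A A s r)"
  unfolding truncated_tree_code_def
proof (intro conjI ballI impI allI)
  fix x :: "'a list list"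
  show "TC_A A s r x \<in> lists {w. length w = r + s}"
    by (auto simp: in_set_conv_nth)
  show "length (TC_A A s r x) = length x" by simp
next
  fix x y :: "'a list list" and i
  assume x: "x \<in> lists {v. length v = s}" and y: "y \<in> lists {v. length v = s}"
    and "length x \<le> n" "length y \<le> n" "i < length x" "i < length y"
    and prefix: "take (Suc i) x = take (Suc i) y"
  define N where "N = (r + s) * n"
  have "(r + s) * length x \<le> N" "(r + s) * length y \<le> N"
    using \<open>length x \<le> n\<close> \<open>length y \<le> n\<close> by (simp_all add: N_def)
  have "(r + s) * Suc i \<le> (r + s) * length x" "(r + s) * Suc i \<le> (r + s) * length y"
    using \<open>i < length x\<close> \<open>i < length y\<close> by (simp_all only: mult_le_mono2 Suc_le_eq)
  have "x ! b = y ! b" if "b \<le> i" for b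
    using prefix that by (metis le_imp_less_Suc nth_take)
  moreover have "j div (r + s) \<le> i" if "j < (r + s) * Suc i" for j
    using that less_mult_imp_div_less[of j "Suc i" "r + s"] by (simp add: mult.commute)
  ultimately have "pad_vec N s r x $ j = pad_vec N s r y $ j" if "j < (r + s) * Suc i" "j < N" for j
    using that \<open>(r + s) * Suc i \<le> (r + s) * length x\<close> \<open>(r + s) * Suc i \<le> (r + s) * length y\<close>
    by (simp add: pad_vec_def)
  then have "(A *\<^sub>v pad_vec N s r x) $ ((r + s) * i + e) = (A *\<^sub>v pad_vec N s r y) $ ((r + s) * i + e)"
    if "e < r + s" for e
    using that \<open>(r + s) * Suc i \<le> (r + s) * length x\<close> \<open>(r + s) * length x \<le> N\<close>
    by (intro lower_tri_mult_mat_vec_cong[OF \<open>lower_tri A\<close>]) (auto simp: A[folded N_def] pad_vec_def)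
  then show "TC_A A s r x ! i = TC_A A s r y ! i"
    using TC_A_nth_nth[OF A[folded N_def] x] TC_A_nth_nth[OF A[folded N_def] y]
      \<open>i < length x\<close> \<open>i < length y\<close> \<open>(r + s) * length x \<le> N\<close> \<open>(r + s) * length y \<le> N\<close>
    by (intro nth_equalityI) auto
qed

lemma split_idx_first_difference:
  assumes "length y = length x" and "x \<noteq> y"
  obtains t where "t < length x" "x ! t \<noteq> y ! t" "\<forall>b<t. x ! b = y ! b" "split_idx x y = t"
proof -
  have "\<exists>i. i < length x \<and> x ! i \<noteq> y ! i"
  proof (rule ccontr)
    assume "\<nexists>i. i < length x \<and> x ! i \<noteq> y ! i"
    then have "x = y" using assms(1) by (intro nth_equalityI) auto
    with \<open>x \<noteq> y\<close> show False by contradiction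
  qed
  then obtain t where t: "t < length x" "x ! t \<noteq> y ! t"
    and least: "\<forall>b<t. \<not> (b < length x \<and> x ! b \<noteq> y ! b)"
    unfolding exists_least_iff[of "\<lambda>i. i < length x \<and> x ! i \<noteq> y ! i"] by blast
  then have agree: "\<forall>b<t. x ! b = y ! b" by auto
  have "split_idx x y = t"
    unfolding split_idx_def
  proof (rule Greatest_equality)
    show "t \<le> length x \<and> take t x = take t y"
      using agree t(1) assms(1) by (auto intro: nth_equalityI)
  next
    fix t' assume "t' \<le> length x \<and> take t' x = take t' y"
    then show "t' \<le> t" using t by (metis nth_take not_le)
  qed
  with t agree show thesis by (rule that)
qed

lemma pad_vec_diff_nth:
  fixes x y :: "'a::group_add list list"
  assumes "length y = length x" and "j < N"
  shows "(pad_vec N s r x - pad_vec N s r y) $ j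
           = (if j < (r + s) * length x \<and> j mod (r + s) < s
              then x ! (j div (r + s)) ! (j mod (r + s)) - y ! (j div (r + s)) ! (j mod (r + s))
              else 0)"
  using assms by (simp add: pad_vec_def)

lemma pad_vec_diff_first_nonzero:
  fixes x y :: "'a::ab_group_add list list"
  assumes x: "x \<in> lists {v. length v = s}" and y: "y \<in> lists {v. length v = s}"
    and "length y = length x" and "(r + s) * length x \<le> N"
    and "t < length x" and "x ! t \<noteq> y ! t" and agree: "\<forall>b<t. x ! b = y ! b"
  obtains a where "(pad_vec N s r x - pad_vec N s r y) $ a \<noteq> 0"
    "\<forall>j<a. (pad_vec N s r x - pad_vec N s r y) $ j = 0" "(r + s) * t \<le> a" "a < (r + s) * t + s"
proof -
  define w where "w = r + s"
  define v where "v = pad_vec N s r x - pad_vec N s r y"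
  have "w * Suc t \<le> w * length x" using \<open>t < length x\<close> by (intro mult_le_mono2) simp
  have "length (x ! t) = s" "length (y ! t) = s"
    using x y \<open>t < length x\<close> \<open>length y = length x\<close> by auto
  then obtain e where "e < s" "x ! t ! e \<noteq> y ! t ! e"
    using \<open>x ! t \<noteq> y ! t\<close> nth_equalityI[of "x ! t" "y ! t"] by auto
  then have "v $ (w * t + e) \<noteq> 0"
    using \<open>w * Suc t \<le> w * length x\<close> assms(3,4)
    by (simp add: v_def pad_vec_diff_nth w_def)
  then obtain a where a: "v $ a \<noteq> 0" "\<forall>j<a. v $ j = 0"
    using exists_least_iff[of "\<lambda>j. v $ j \<noteq> 0"] by blast
  have "\<not> w * t + e < a" using a(2) \<open>v $ (w * t + e) \<noteq> 0\<close> by blast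
  then have "a < w * t + s" using \<open>e < s\<close> by linarith
  have "v $ j = 0" if "j < w * t" for j
  proof -
    have "j div w < t" using that less_mult_imp_div_less[of j t w] by (simp add: mult.commute)
    moreover have "j < N" using that \<open>w * Suc t \<le> w * length x\<close> assms(4) by (simp add: w_def)
    ultimately show ?thesis using agree assms(3) by (simp add: v_def pad_vec_diff_nth w_def)
  qed
  then have "w * t \<le> a" using a(1) not_less by blast
  with a \<open>a < w * t + s\<close> show thesis by (intro that) (simp_all add: v_def w_def)
qed

lemma TC_A_nth_neq:
  assumes A: "A \<in> carrier_mat N N"
    and x: "x \<in> lists {v. length v = s}" and y: "y \<in> lists {v. length v = s}"
    and "length y = length x" and "(r + s) * length x \<le> N" and "b < length x" and "e < r + s"
    and "(A *\<^sub>v (pad_vec N s r x - pad_vec N s r y)) $ ((r + s) * b + e) \<noteq> 0"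
  shows "TC_A A s r x ! b \<noteq> TC_A A s r y ! b"
proof -
  have "(r + s) * b + e < (r + s) * Suc b" using \<open>e < r + s\<close> by simp
  also have "\<dots> \<le> N" using \<open>b < length x\<close> assms(5) mult_le_mono2[of "Suc b" "length x" "r + s"] by simp
  finally have "TC_A A s r x ! b ! e \<noteq> TC_A A s r y ! b ! e"
    using assms TC_A_nth_nth[OF A x] TC_A_nth_nth[OF A y]
    by (simp add: mult_minus_distrib_mat_vec pad_vec_def)
  then show ?thesis by auto
qed

lemma ratio_less_of_few_zero_blocks:
  fixes r s d z h :: nat
  assumes "(r + s) * z < s * d" and "d \<le> h + z"
  shows "real r / real (r + s) < real h / real d"
proof -
  have "(r + s) * d \<le> (r + s) * h + (r + s) * z"
    using assms(2) by (metis add_mult_distrib2 mult_le_mono2)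
  then have "r * d < (r + s) * h" using assms(1) by (simp add: add_mult_distrib)
  then have "real r * real d < real (r + s) * real h" by (metis of_nat_less_iff of_nat_mult)
  moreover have "s * d \<noteq> 0" using assms(1) by linarith
  then have "0 < real d" "0 < real (r + s)" by simp_all
  ultimately show ?thesis by (simp add: field_simps)
qed

lemma TC_A_distance_ratio_gt:
  fixes A :: "'a::field mat"
  assumes TNS: "totally_non_singular A" and A: "A \<in> carrier_mat ((r + s) * n) ((r + s) * n)"
    and x: "x \<in> lists {v. length v = s}" and y: "y \<in> lists {v. length v = s}"
    and "length x \<le> n" and "length y = length x" and "x \<noteq> y"
  shows "real r / real (r + s)
           < real (hamming (TC_A A s r x) (TC_A A s r y)) / real (length x - split_idx x y)"
proof -
  define w where "w = r + s"
  define k where "k = length x"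
  define N where "N = w * n"
  define v where "v = pad_vec N s r x - pad_vec N s r y"
  have A: "A \<in> carrier_mat N N" using A by (simp add: N_def w_def)
  have "w * k \<le> N" using \<open>length x \<le> n\<close> by (simp add: N_def k_def)
  obtain t where t: "t < k" "x ! t \<noteq> y ! t" "\<forall>b<t. x ! b = y ! b" "split_idx x y = t"
    using split_idx_first_difference[OF \<open>length y = length x\<close> \<open>x \<noteq> y\<close>] unfolding k_def by blast
  obtain a where a: "v $ a \<noteq> 0" "\<forall>j<a. v $ j = 0" "w * t \<le> a" "a < w * t + s"
    using pad_vec_diff_first_nonzero[OF x y \<open>length y = length x\<close> _ t(1-3)[unfolded k_def]]
      \<open>w * k \<le> N\<close> unfolding v_def w_def k_def by blast
  define ZB where "ZB = {b. t \<le> b \<and> b < k \<and> (\<forall>e<w. (A *\<^sub>v v) $ (w * b + e) = 0)}"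
  have "w * card ZB < s * (k - t)"
    unfolding ZB_def
  proof (rule totally_non_singular_card_zero_blocks_less[OF TNS A _ _ t(1) \<open>w * k \<le> N\<close> _ a])
    show "v \<in> carrier_vec N" by (simp add: v_def pad_vec_def)
    show "\<forall>j<N. v $ j \<noteq> 0 \<longrightarrow> j < w * k \<and> j mod w < s"
      using \<open>length y = length x\<close> by (simp add: v_def pad_vec_diff_nth w_def k_def)
  qed (simp add: w_def)
  moreover have "{t..<k} - ZB \<subseteq> {b. b < length (TC_A A s r x) \<and> b < length (TC_A A s r y)
                                      \<and> TC_A A s r x ! b \<noteq> TC_A A s r y ! b}"
  proof
    fix b assume "b \<in> {t..<k} - ZB"
    then obtain e where "b < k" "e < w" "(A *\<^sub>v v) $ (w * b + e) \<noteq> 0" by (auto simp: ZB_def)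
    then have "TC_A A s r x ! b \<noteq> TC_A A s r y ! b"
      using TC_A_nth_neq[OF A x y \<open>length y = length x\<close>] \<open>w * k \<le> N\<close>
      by (simp add: v_def w_def k_def)
    then show "b \<in> {b. b < length (TC_A A s r x) \<and> b < length (TC_A A s r y)
                        \<and> TC_A A s r x ! b \<noteq> TC_A A s r y ! b}"
      using \<open>b < k\<close> \<open>length y = length x\<close> by (simp add: k_def)
  qed
  then have "card ({t..<k} - ZB) \<le> hamming (TC_A A s r x) (TC_A A s r y)"
    unfolding hamming_def by (rule card_mono[rotated]) simp
  moreover have "k - t - card ZB \<le> card ({t..<k} - ZB)"
    using diff_card_le_card_Diff[of ZB "{t..<k}"] by (simp add: ZB_def)
  ultimately show ?thesis
    using ratio_less_of_few_zero_blocks[of r s "card ZB" "k - t"] t(4) by (simp add: w_def k_def)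
qed

lemma tc_distance_TC_A_gt:
  fixes A :: "'a::{field,finite} mat"
  assumes TNS: "totally_non_singular A" and A: "A \<in> carrier_mat ((r + s) * n) ((r + s) * n)"
    and "0 < n" and "0 < s"
  shows "real r / real (r + s) < tc_distance n {v. length v = s} (TC_A A s r)"
proof -
  define \<Sigma> where "\<Sigma> = {v :: 'a list. length v = s}"
  define X where "X = {(x, y). x \<in> lists \<Sigma> \<and> y \<in> lists \<Sigma> \<and> length x \<le> n \<and> length y = length x \<and> x \<noteq> y}"
  define ratio where "ratio = (\<lambda>(x, y). real (hamming (TC_A A s r x) (TC_A A s r y))
                                         / real (length x - split_idx x y))"
  have "finite \<Sigma>" using finite_lists_length_eq[of "UNIV :: 'a set" s] by (simp add: \<Sigma>_def)
  then have "finite {xs. set xs \<subseteq> \<Sigma> \<and> length xs \<le> n}" by (rule finite_lists_length_le)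
  then have "finite ({xs. set xs \<subseteq> \<Sigma> \<and> length xs \<le> n} \<times> {xs. set xs \<subseteq> \<Sigma> \<and> length xs \<le> n})"
    by simp
  then have "finite X" by (rule finite_subset[rotated]) (auto simp: X_def)
  have "replicate s 0 \<noteq> (replicate s 1 :: 'a list)"
    using \<open>0 < s\<close> by (metis length_greater_0_conv length_replicate nth_replicate zero_neq_one)
  then have "([replicate s 0], [replicate s 1]) \<in> X"
    using \<open>0 < n\<close> by (simp add: X_def \<Sigma>_def)
  moreover have "real r / real (r + s) < ratio p" if "p \<in> X" for p
    using that TC_A_distance_ratio_gt[OF TNS A] by (auto simp: X_def ratio_def \<Sigma>_def)
  ultimately have "real r / real (r + s) < Inf (ratio ` X)"
    using \<open>finite X\<close> by (subst finite_less_Inf_iff) auto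
  then show ?thesis by (simp add: tc_distance_def X_def ratio_def \<Sigma>_def)
qed

lemma ln_card_lists_length_ratio:
  assumes "0 < m"
  shows "ln (real (card {v :: 'a::{finite,zero_neq_one} list. length v = l}))
           / ln (real (card {v :: 'a list. length v = m})) = real l / real m"
proof -
  have card_lists: "card {v :: 'a list. length v = d} = card (UNIV :: 'a set) ^ d" for d
    using card_lists_length_eq[of "UNIV :: 'a set" d] by simp
  have "2 \<le> card (UNIV :: 'a set)"
    using card_mono[of "UNIV :: 'a set" "{0, 1}"] by simp
  then have "0 < ln (real (card (UNIV :: 'a set)))" by simp
  then show ?thesis using assms by (simp add: card_lists ln_realpow)
qed

theorem theorem2p6:
  fixes A :: "'a::{field,finite} mat" and n r s :: nat
  assumes "n > 0" and "r > 0" and "s > 0"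
    and "A \<in> carrier_mat ((r+s)*n) ((r+s)*n)"
    and "totally_non_singular A"
  shows "truncated_tree_code n {v. length v = s} {w. length w = r+s} (TC_A A s r)
       \<and> MDS_tree_code n {v. length v = s} {w. length w = r+s} (TC_A A s r)
       \<and> tc_distance n {v. length v = s} (TC_A A s r) > real r / real (r+s)"
proof (intro conjI)
  show "truncated_tree_code n {v. length v = s} {w. length w = r+s} (TC_A A s r)"
    using totally_non_singular_imp_lower_tri[OF assms(5)] assms(4) by (rule truncated_tree_code_TC_A)
  show distance: "tc_distance n {v. length v = s} (TC_A A s r) > real r / real (r+s)"
    using tc_distance_TC_A_gt assms by blast
  have "1 - real s / real (r + s) = real r / real (r + s)"
    using \<open>s > 0\<close> by (simp add: field_simps)
  then show "MDS_tree_code n {v. length v = s} {w. length w = r+s} (TC_A A s r)"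
    using distance \<open>s > 0\<close> by (simp add: MDS_tree_code_def ln_card_lists_length_ratio)
qed

end
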